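(* In the setting where, in the inertial frame of the City (speed of light $c$), a Caravan leaves the City at time $0$ with constant velocity $V_c$, and a Messenger, after riding with the Caravan until the Caravan's proper time equals $T_1>0$, shuttles between Caravan and City at constant speed $V_m$ with instantaneous turnarounds, where $0<V_c<V_m<c$ and $q=\frac{V_c}{V_m-V_c}$: the Messenger's proper time $T_{n,\mathrm{Mes}}$ at his $n$-th departure from the Caravan ($n\ge1$) is $$T_{n,\mathrm{Mes}}=\rho\,T_1(1+2q)^{n-1}+(1-\rho)\,T_1,\qquad \rho=\frac{\sqrt{1-V_m^2/c^2}}{\sqrt{1-V_c^2/c^2}}.$$
   Context: Proper time of an observer moving with velocity $\vec v(\tau)$ in an inertial frame is $\int_0^t\sqrt{1-|\vec v(\tau)|^2/c^2}\,d\tau$. All clocks (City, Caravan, Messenger) are synchronized at the origin at time $0$. Before leaving the Caravan the Messenger moves with it at velocity $V_c$. *)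

theory Defs
  imports "HOL-Analysis.Analysis"
begin

end

theory Submission
  imports Defs
begin

(*
  All motion is piecewise at constant speed, so the Messenger's
  proper time is a sum of lengths of City-time intervals, each weighted by the
  Lorentz factor  sqrt (1 - V^2/c^2)  of the speed V on that interval.

  1. A constant-speed leg [x, y] contributes  sqrt (1 - V^2/c^2) * (y - x)
     (lemma proper_time_leg; endpoints are a null set for the integral).
  2. One round trip "Caravan -> City -> Caravan" is governed by two linear
     meeting equations; solving them shows that the departure times grow
     geometrically by the factor  1 + 2q  and that the trip is well ordered
     (lemma round_trip).
  3. Hence d n = d 1 * (1 + 2q)^(n-1) (lemma geometric_growth), and by
     induction over the round trips the proper time up to the n-th departure
     is  T1 + sqrt (1 - Vm^2/c^2) * (d n - d 1)  (this is the Messenger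
     riding until T1 and then always moving at speed Vm).
  4. Substituting d 1 = T1 / sqrt (1 - Vc^2/c^2) gives the stated formula.
*)

lemma lorentz_factor_pos:
  fixes V c :: real
  assumes "\<bar>V\<bar> < c"
  shows "sqrt (1 - V\<^sup>2 / c\<^sup>2) > 0"
proof -
  have "c > 0" using assms by linarith
  have "V\<^sup>2 < c\<^sup>2"
    using power_strict_mono[OF assms, of 2] by simp
  then show ?thesis using \<open>c > 0\<close> by simp
qed

lemma has_integral_const_interior:
  fixes f :: "real \<Rightarrow> real"
  assumes "x \<le> y" and "\<And>t. x < t \<Longrightarrow> t < y \<Longrightarrow> f t = C"
  shows "(f has_integral (C * (y - x))) {x..y}"
proof -
  have const: "((\<lambda>t. C) has_integral (C * (y - x))) {x..y}"
    using has_integral_const_real[of C x y] assms(1) by (simp add: mult.commute)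
  show ?thesis
    by (rule has_integral_spike_finite[of "{x, y}" _ _ "\<lambda>t. C"]) (use assms const in auto)
qed

lemma proper_time_leg:
  fixes v :: "real \<Rightarrow> real"
  assumes "x \<le> y" and "\<And>t. x < t \<Longrightarrow> t < y \<Longrightarrow> \<bar>v t\<bar> = V"
  shows "((\<lambda>t. sqrt (1 - \<bar>v t\<bar>\<^sup>2 / c\<^sup>2)) has_integral
           (sqrt (1 - V\<^sup>2 / c\<^sup>2) * (y - x))) {x..y}"
  by (rule has_integral_const_interior) (use assms in auto)

text \<open>The Messenger leaves the Caravan at time d, meets the
  City at time a (Caravan position Vc*d equals the distance Vm*(a-d) covered
  back), and catches the Caravan again at time d'.\<close>
lemma round_trip:
  fixes Vc Vm d a d' :: real
  assumes "0 < Vc" and "Vc < Vm" and "0 < d"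
    and city: "Vc * d - Vm * (a - d) = 0"
    and caravan: "Vm * (d' - a) = Vc * d'"
  shows "d < a" and "a < d'" and "d' = d * (1 + 2 * (Vc / (Vm - Vc)))"
proof -
  have a_eq: "a = d * (Vc + Vm) / Vm"
    using city assms(1,2) by (simp add: field_simps)
  have d'_eq: "d' = Vm * a / (Vm - Vc)"
    using caravan assms(1,2) by (simp add: field_simps)
  show "d < a"
    unfolding a_eq using assms(1,2,3) by (simp add: field_simps)
  have "d' = d * (Vc + Vm) / (Vm - Vc)"
    unfolding d'_eq a_eq using assms(1,2) by simp
  then show d'_closed: "d' = d * (1 + 2 * (Vc / (Vm - Vc)))"
    using assms(1,2) by (simp add: field_simps)
  have "Vc / (Vm - Vc) > 0" using assms(1,2) by simp
  then have "Vc * d' > 0"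
    using d'_closed assms(1,3) by (simp add: zero_less_mult_iff)
  then have "Vm * (d' - a) > 0" using caravan by simp
  then show "a < d'" using assms(1,2) by (simp add: zero_less_mult_iff)
qed

lemma geometric_growth:
  fixes d :: "nat \<Rightarrow> 'a::monoid_mult"
  assumes "\<And>k. k \<ge> 1 \<Longrightarrow> d (Suc k) = d k * r" and "n \<ge> 1"
  shows "d n = d 1 * r ^ (n - 1)"
  using assms(2)
proof (induction n rule: dec_induct)
  case base
  then show ?case by simp
next
  case (step k)
  then show ?case
    using assms(1)[OF step.hyps(1)] by (metis Suc_diff_le diff_Suc_1 mult.assoc power_Suc2)
qed

lemma departures:
  fixes Vc Vm :: real and d a :: "nat \<Rightarrow> real"
  assumes "0 < Vc" and "Vc < Vm" and "0 < d 1"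
    and to_city: "\<And>k. k \<ge> 1 \<Longrightarrow> Vc * d k - Vm * (a k - d k) = 0"
    and catch_up: "\<And>k. k \<ge> 1 \<Longrightarrow> Vm * (d (Suc k) - a k) = Vc * d (Suc k)"
    and "k \<ge> 1"
  shows "0 < d k \<and> d k < a k \<and> a k < d (Suc k) \<and> d (Suc k) = d k * (1 + 2 * (Vc / (Vm - Vc)))"
  using \<open>k \<ge> 1\<close>
proof (induction k rule: dec_induct)
  case base
  show ?case using round_trip[OF assms(1,2,3) to_city catch_up] \<open>0 < d 1\<close> by simp
next
  case (step k)
  then have "0 < d (Suc k)" by linarith
  then show ?case using round_trip[OF assms(1,2) _ to_city catch_up] step.hyps(1) by simp
qed

lemma proper_time_until_departure:
  fixes c Vc Vm :: real and d a :: "nat \<Rightarrow> real" and v :: "real \<Rightarrow> real"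
  assumes order: "\<And>k. k \<ge> 1 \<Longrightarrow> 0 < d k \<and> d k < a k \<and> a k < d (Suc k)"
    and ride: "\<And>\<tau>. 0 \<le> \<tau> \<Longrightarrow> \<tau> < d 1 \<Longrightarrow> \<bar>v \<tau>\<bar> = Vc"
    and to_city: "\<And>k \<tau>. k \<ge> 1 \<Longrightarrow> d k < \<tau> \<Longrightarrow> \<tau> < a k \<Longrightarrow> \<bar>v \<tau>\<bar> = Vm"
    and to_caravan: "\<And>k \<tau>. k \<ge> 1 \<Longrightarrow> a k < \<tau> \<Longrightarrow> \<tau> < d (Suc k) \<Longrightarrow> \<bar>v \<tau>\<bar> = Vm"
    and "k \<ge> 1"
  shows "((\<lambda>\<tau>. sqrt (1 - \<bar>v \<tau>\<bar>\<^sup>2 / c\<^sup>2)) has_integral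
           (sqrt (1 - Vc\<^sup>2 / c\<^sup>2) * d 1 + sqrt (1 - Vm\<^sup>2 / c\<^sup>2) * (d k - d 1))) {0..d k}"
  using \<open>k \<ge> 1\<close>
proof (induction k rule: dec_induct)
  case base
  have "0 < d 1" using order[of 1] by simp
  then show ?case using proper_time_leg[of 0 "d 1" v Vc c] ride by simp
next
  case (step k)
  note ordered = order[OF step.hyps(1)]
  have leg_to_city: "((\<lambda>\<tau>. sqrt (1 - \<bar>v \<tau>\<bar>\<^sup>2 / c\<^sup>2)) has_integral
      (sqrt (1 - Vm\<^sup>2 / c\<^sup>2) * (a k - d k))) {d k..a k}"
    by (rule proper_time_leg) (use ordered to_city[OF step.hyps(1)] in auto)
  have leg_to_caravan: "((\<lambda>\<tau>. sqrt (1 - \<bar>v \<tau>\<bar>\<^sup>2 / c\<^sup>2)) has_integral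
      (sqrt (1 - Vm\<^sup>2 / c\<^sup>2) * (d (Suc k) - a k))) {a k..d (Suc k)}"
    by (rule proper_time_leg) (use ordered to_caravan[OF step.hyps(1)] in auto)
  have "((\<lambda>\<tau>. sqrt (1 - \<bar>v \<tau>\<bar>\<^sup>2 / c\<^sup>2)) has_integral
      (sqrt (1 - Vc\<^sup>2 / c\<^sup>2) * d 1 + sqrt (1 - Vm\<^sup>2 / c\<^sup>2) * (d k - d 1)
        + (sqrt (1 - Vm\<^sup>2 / c\<^sup>2) * (a k - d k) + sqrt (1 - Vm\<^sup>2 / c\<^sup>2) * (d (Suc k) - a k))))
      {0..d (Suc k)}"
    by (intro has_integral_combine[OF _ _ step.IH has_integral_combine[OF _ _ leg_to_city leg_to_caravan]])
      (use ordered in linarith)+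
  then show ?case by (simp add: algebra_simps)
qed

theorem mainTheorem3:
  fixes c Vc Vm T1 :: real
    and d a :: "nat \<Rightarrow> real"
    and v :: "real \<Rightarrow> real"
    and n :: nat
  assumes "0 < Vc" and "Vc < Vm" and "Vm < c" and "0 < T1"
    and dep1: "d 1 * sqrt (1 - Vc\<^sup>2 / c\<^sup>2) = T1"
    and to_city: "\<And>k. k \<ge> 1 \<Longrightarrow> Vc * d k - Vm * (a k - d k) = 0"
    and catch_up: "\<And>k. k \<ge> 1 \<Longrightarrow> Vm * (d (Suc k) - a k) = Vc * d (Suc k)"
    and v_ride: "\<And>\<tau>. 0 \<le> \<tau> \<Longrightarrow> \<tau> < d 1 \<Longrightarrow> v \<tau> = Vc"
    and v_back: "\<And>k \<tau>. k \<ge> 1 \<Longrightarrow> d k < \<tau> \<Longrightarrow> \<tau> < a k \<Longrightarrow> v \<tau> = - Vm"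
    and v_out: "\<And>k \<tau>. k \<ge> 1 \<Longrightarrow> a k < \<tau> \<Longrightarrow> \<tau> < d (Suc k) \<Longrightarrow> v \<tau> = Vm"
    and "n \<ge> 1"
  shows "let q = Vc / (Vm - Vc);
             \<rho> = sqrt (1 - Vm\<^sup>2 / c\<^sup>2) / sqrt (1 - Vc\<^sup>2 / c\<^sup>2)
         in ((\<lambda>\<tau>. sqrt (1 - \<bar>v \<tau>\<bar>\<^sup>2 / c\<^sup>2)) has_integral
              (\<rho> * T1 * (1 + 2 * q) ^ (n - 1) + (1 - \<rho>) * T1)) {0 .. d n}"
proof -
  define sc where "sc = sqrt (1 - Vc\<^sup>2 / c\<^sup>2)"
  define sm where "sm = sqrt (1 - Vm\<^sup>2 / c\<^sup>2)"
  define q where "q = Vc / (Vm - Vc)"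
  have "sc > 0" unfolding sc_def using assms(1-3) by (intro lorentz_factor_pos) simp
  then have d1: "d 1 = T1 / sc" using dep1 by (simp add: sc_def[symmetric] field_simps)
  then have "d 1 > 0" using \<open>sc > 0\<close> \<open>0 < T1\<close> by simp
  note trips = departures[OF assms(1,2) \<open>d 1 > 0\<close> to_city catch_up]
  then have ordered: "\<And>k. k \<ge> 1 \<Longrightarrow> 0 < d k \<and> d k < a k \<and> a k < d (Suc k)" by blast
  have "((\<lambda>\<tau>. sqrt (1 - \<bar>v \<tau>\<bar>\<^sup>2 / c\<^sup>2)) has_integral (sc * d 1 + sm * (d n - d 1))) {0..d n}"
    unfolding sc_def sm_def
    by (rule proper_time_until_departure[OF _ _ _ _ \<open>n \<ge> 1\<close>])
      (use ordered v_ride v_back v_out assms(1,2) in auto)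
  moreover have "d n = d 1 * (1 + 2 * q) ^ (n - 1)"
    using geometric_growth[of d "1 + 2 * q" n] trips \<open>n \<ge> 1\<close> unfolding q_def by blast
  then have "sc * d 1 + sm * (d n - d 1) = sm / sc * T1 * (1 + 2 * q) ^ (n - 1) + (1 - sm / sc) * T1"
    using d1 \<open>sc > 0\<close> by (simp add: field_simps)
  ultimately show ?thesis
    unfolding Let_def sc_def[symmetric] sm_def[symmetric] q_def[symmetric] by simp
qed

end
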